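(* Let $\llbracket\cdot\rrbracket$ be an interpretation of types, let $\rho$ be a type and $i\le i'$ in $I_\rho$. (1) If $\rho\in\mathrm{Type}^+$, then the factor system $(\llbracket\rho\rrbracket_i)_{i\in I_\rho}$ is direct, and for all $a\in\llbracket\rho\rrbracket$, $a_i\in\llbracket\rho\rrbracket_i$: $a\triangleright a_i$ implies $a\triangleright emb_{i,i'}(a_i)$. (2) If $\rho\in\mathrm{Type}^-$, then the factor system $(\llbracket\rho\rrbracket_i)_{i\in I_\rho}$ is inverse, and for all $a\in\llbracket\rho\rrbracket$, $a_{i'}\in\llbracket\rho\rrbracket_{i'}$: $a\triangleright a_{i'}$ implies $a\triangleright proj_{i',i}(a_{i'})$.
   Context: Systems and factor systems: for a non-empty directed preordered set $I$, a system consists of pairwise disjoint sets $M_i$ ($i\in I$) and relations $\triangleright\subseteq M_{i'}\times M_i$ ($i\le i'$), reflexive for $i=i'$; $a_i\approx b_j$ iff some $c\in M_{i'}$, $i'\ge i,j$, has $c\triangleright a_i,c\triangleright b_j$; prefactor system: $a_{i'}\approx a_i\iff a_{i'}\triangleright a_i$. A factor system is a prefactor system with $\approx$-preserving $emb_{i,i'}:M_i\to M_{i'}$, $proj_{i',i}:M_{i'}\to M_i$ with $emb_{i,i}(a)\approx a$, $proj_{i,i}(a)\approx a$, $emb_{i',i''}\circ emb_{i,i'}(a)\approx emb_{i,i''}(a)$, $proj_{i',i}\circ proj_{i'',i'}(a)\approx proj_{i'',i}(a)$, $proj_{i',i}(emb_{i,i'}(a))\approx a$, and $a_{i'}\triangleright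 a_i\Rightarrow emb_{i',i''}(a_{i'})\triangleright a_i$, $a_{i''}\triangleright a_i\Rightarrow proj_{i'',i'}(a_{i''})\triangleright a_i$ ($i\le i'\le i''$). It is direct iff $a_{i'}\triangleright a_i\iff a_{i'}\approx emb_{i,i'}(a_i)$, inverse iff $a_{i'}\triangleright a_i\iff proj_{i',i}(a_{i'})\approx a_i$. Filters: for each such $I$ a family $\mathcal F(I)$ of cofinal subsets, closed under supersets and finite intersections, containing all non-empty up-sets; standing Condition (D): $H\in\mathcal F(I\times J)$, $I'\in\mathcal F(I)$ imply $\{j\mid\exists i\in I',(i,j)\in H\}\in\mathcal F(J)$. A target for $M_I$: a set $M$ with relation $a\triangleright a_i$ such that $\{i\mid\exists a_i,a\triangleright a_i\}\in\mathcal F(I)$ and $a\triangleright a_{i'},a\triangleright a_i\Rightarrow a_{i'}\triangleright a_i$; a limit is a target $M$ such that for every target $N$ there is a unique $\Phi:N\to M$ with $b\triangleright a_i\Rightarrow\Phi(b)\triangleright a_i$. Function space of factor systems $[M_I\to N_J]$: indices $i\to j\in I\times J$, states = $\approx$-preserving functions $M_i\to N_j$, $f'\triangleright f$ iff $a_{i'}\triangleright a_i\Rightarrow f'(a_{i'})\triangleright f(a_i)$, embeddings $f\mapsto emb_{j,j'}\circ f\circ proj_{i',i}$, projections $f'\mapsto proj_{j',j}\circ f'\circ emb_{i,i'}$. For targets $M,N$: $[M\to_{\mathcal F}N]=\{f:M\to N\mid I_f\in\mathcal F(I\times J)\}$ with $f\triangleright f_{i\to j}$ iff $a\triangleright a_i\Rightarrow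 f(a)\triangleright f_{i\to j}(a_i)$ for all $a\in M,a_i\in M_i$, and $I_f=\{i\to j\mid\exists f_{i\to j},f\triangleright f_{i\to j}\}$. Types: $\rho::=\iota\mid\rho\to\rho$ over base types $\iota$, one of which is $\mathsf{prop}$. Positive and negative types: $\mathrm{Type}^+\ni\rho^+::=\iota\mid\rho^-\to\rho^+$ and $\mathrm{Type}^-\ni\rho^-::=\mathsf{prop}\mid\rho^+\to\rho^-$ ($\iota$ any base type). Each type has a non-empty directed index set $I_\rho$, with $I_{\mathsf{prop}}=\{\mathsf{prop}\}$ and $I_{\rho\to\sigma}=I_\rho\times I_\sigma$. An interpretation of types assigns to each type $\rho$ a factor system $(\llbracket\rho\rrbracket_i)_{i\in I_\rho}$ and a limit $\llbracket\rho\rrbracket$ of it (with relation $a\triangleright a_i$), such that: for each base type $\iota$ the factor system is direct; $\mathsf{prop}$ is interpreted by the one-index factor system with state $\{true,false\}$ (relations are equality) and limit $\{true,false\}$ (with $b\triangleright b'\iff b=b'$); $\rho\to\sigma$ is interpreted by the function-space factor system $[(\llbracket\rho\rrbracket_i)_{i}\to(\llbracket\sigma\rrbracket_j)_{j}]$ with limit $[\llbracket\rho\rrbracket\to_{\mathcal F}\llbracket\sigma\rrbracket]$. *)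

theory Defs
  imports Main "HOL-Library.FuncSet"
begin

text \<open>Index universe: indices of base types are drawn from 'a, the single index of
  prop is IProp, and an index of an arrow type is a pair IPair i j.\<close>
datatype 'a ix = IProp | IBase 'a | IPair "'a ix" "'a ix"

definition directed_preorder :: "'i set \<Rightarrow> ('i \<Rightarrow> 'i \<Rightarrow> bool) \<Rightarrow> bool" where
  "directed_preorder I le \<longleftrightarrow>
     I \<noteq> {} \<and> (\<forall>i\<in>I. le i i) \<and>
     (\<forall>i\<in>I. \<forall>j\<in>I. \<forall>k\<in>I. le i j \<and> le j k \<longrightarrow> le i k) \<and>
     (\<forall>i\<in>I. \<forall>j\<in>I. \<exists>k\<in>I. le i k \<and> le j k)"

definition cofinal :: "'i set \<Rightarrow> ('i \<Rightarrow> 'i \<Rightarrow> bool) \<Rightarrow> 'i set \<Rightarrow> bool" where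
  "cofinal I le H \<longleftrightarrow> H \<subseteq> I \<and> (\<forall>i\<in>I. \<exists>h\<in>H. le i h)"

definition upset :: "'i set \<Rightarrow> ('i \<Rightarrow> 'i \<Rightarrow> bool) \<Rightarrow> 'i set \<Rightarrow> bool" where
  "upset I le U \<longleftrightarrow> U \<subseteq> I \<and> (\<forall>u\<in>U. \<forall>i\<in>I. le u i \<longrightarrow> i \<in> U)"

fun pair_le :: "('a ix \<Rightarrow> 'a ix \<Rightarrow> bool) \<Rightarrow> ('a ix \<Rightarrow> 'a ix \<Rightarrow> bool) \<Rightarrow> 'a ix \<Rightarrow> 'a ix \<Rightarrow> bool" where
  "pair_le le1 le2 (IPair i j) (IPair i' j') = (le1 i i' \<and> le2 j j')"
| "pair_le le1 le2 _ _ = False"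

definition pair_set :: "'a ix set \<Rightarrow> 'a ix set \<Rightarrow> 'a ix set" where
  "pair_set I J = {IPair i j | i j. i \<in> I \<and> j \<in> J}"

definition filter_assignment :: "('a ix set \<Rightarrow> ('a ix \<Rightarrow> 'a ix \<Rightarrow> bool) \<Rightarrow> 'a ix set set) \<Rightarrow> bool" where
  "filter_assignment F \<longleftrightarrow>
     (\<forall>I le. directed_preorder I le \<longrightarrow>
        (\<forall>H\<in>F I le. cofinal I le H) \<and>
        (\<forall>H\<in>F I le. \<forall>H'. H \<subseteq> H' \<and> H' \<subseteq> I \<longrightarrow> H' \<in> F I le) \<and>
        (\<forall>H\<in>F I le. \<forall>H'\<in>F I le. H \<inter> H' \<in> F I le) \<and>
        (\<forall>U. U \<noteq> {} \<and> upset I le U \<longrightarrow> U \<in> F I le))"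

definition condition_D :: "('a ix set \<Rightarrow> ('a ix \<Rightarrow> 'a ix \<Rightarrow> bool) \<Rightarrow> 'a ix set set) \<Rightarrow> bool" where
  "condition_D F \<longleftrightarrow>
     (\<forall>I leI J leJ H I'. directed_preorder I leI \<and> directed_preorder J leJ \<and>
        H \<in> F (pair_set I J) (pair_le leI leJ) \<and> I' \<in> F I leI \<longrightarrow>
        {j\<in>J. \<exists>i\<in>I'. IPair i j \<in> H} \<in> F J leJ)"

text \<open>States carry their index explicitly: M i is the set of states at index i,
  tr i' i a b means a_{i'} \<triangleright> b_i (only relevant for i \<le> i', a \<in> M i', b \<in> M i).
  This is the disjoint-union presentation of a system.\<close>

definition sim :: "'i set \<Rightarrow> ('i \<Rightarrow> 'i \<Rightarrow> bool) \<Rightarrow> ('i \<Rightarrow> 'v set) \<Rightarrow>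
    ('i \<Rightarrow> 'i \<Rightarrow> 'v \<Rightarrow> 'v \<Rightarrow> bool) \<Rightarrow> 'i \<Rightarrow> 'v \<Rightarrow> 'i \<Rightarrow> 'v \<Rightarrow> bool" where
  "sim I le M tr i a j b \<longleftrightarrow>
     (\<exists>k\<in>I. le i k \<and> le j k \<and> (\<exists>c\<in>M k. tr k i c a \<and> tr k j c b))"

definition system :: "'i set \<Rightarrow> ('i \<Rightarrow> 'i \<Rightarrow> bool) \<Rightarrow> ('i \<Rightarrow> 'v set) \<Rightarrow>
    ('i \<Rightarrow> 'i \<Rightarrow> 'v \<Rightarrow> 'v \<Rightarrow> bool) \<Rightarrow> bool" where
  "system I le M tr \<longleftrightarrow> directed_preorder I le \<and> (\<forall>i\<in>I. \<forall>a\<in>M i. tr i i a a)"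

definition prefactor_system :: "'i set \<Rightarrow> ('i \<Rightarrow> 'i \<Rightarrow> bool) \<Rightarrow> ('i \<Rightarrow> 'v set) \<Rightarrow>
    ('i \<Rightarrow> 'i \<Rightarrow> 'v \<Rightarrow> 'v \<Rightarrow> bool) \<Rightarrow> bool" where
  "prefactor_system I le M tr \<longleftrightarrow> system I le M tr \<and>
     (\<forall>i\<in>I. \<forall>i'\<in>I. le i i' \<longrightarrow>
        (\<forall>a'\<in>M i'. \<forall>a\<in>M i. sim I le M tr i' a' i a \<longleftrightarrow> tr i' i a' a))"

definition factor_system :: "'i set \<Rightarrow> ('i \<Rightarrow> 'i \<Rightarrow> bool) \<Rightarrow> ('i \<Rightarrow> 'v set) \<Rightarrow>
    ('i \<Rightarrow> 'i \<Rightarrow> 'v \<Rightarrow> 'v \<Rightarrow> bool) \<Rightarrow> ('i \<Rightarrow> 'i \<Rightarrow> 'v \<Rightarrow> 'v) \<Rightarrow> ('i \<Rightarrow> 'i \<Rightarrow> 'v \<Rightarrow> 'v) \<Rightarrow> bool" where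
  "factor_system I le M tr emb prj \<longleftrightarrow> prefactor_system I le M tr \<and>
     (\<forall>i\<in>I. \<forall>i'\<in>I. le i i' \<longrightarrow>
        (\<forall>a\<in>M i. emb i i' a \<in> M i') \<and>
        (\<forall>a\<in>M i'. prj i' i a \<in> M i) \<and>
        (\<forall>a\<in>M i. \<forall>b\<in>M i. sim I le M tr i a i b \<longrightarrow> sim I le M tr i' (emb i i' a) i' (emb i i' b)) \<and>
        (\<forall>a\<in>M i'. \<forall>b\<in>M i'. sim I le M tr i' a i' b \<longrightarrow> sim I le M tr i (prj i' i a) i (prj i' i b)) \<and>
        (\<forall>a\<in>M i. sim I le M tr i (prj i' i (emb i i' a)) i a)) \<and>
     (\<forall>i\<in>I. \<forall>a\<in>M i. sim I le M tr i (emb i i a) i a \<and> sim I le M tr i (prj i i a) i a) \<and>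
     (\<forall>i\<in>I. \<forall>i'\<in>I. \<forall>i''\<in>I. le i i' \<and> le i' i'' \<longrightarrow>
        (\<forall>a\<in>M i. sim I le M tr i'' (emb i' i'' (emb i i' a)) i'' (emb i i'' a)) \<and>
        (\<forall>a\<in>M i''. sim I le M tr i (prj i' i (prj i'' i' a)) i (prj i'' i a)) \<and>
        (\<forall>a\<in>M i'. \<forall>b\<in>M i. tr i' i a b \<longrightarrow> tr i'' i (emb i' i'' a) b) \<and>
        (\<forall>a\<in>M i''. \<forall>b\<in>M i. tr i'' i a b \<longrightarrow> tr i' i (prj i'' i' a) b))"

definition direct :: "'i set \<Rightarrow> ('i \<Rightarrow> 'i \<Rightarrow> bool) \<Rightarrow> ('i \<Rightarrow> 'v set) \<Rightarrow>
    ('i \<Rightarrow> 'i \<Rightarrow> 'v \<Rightarrow> 'v \<Rightarrow> bool) \<Rightarrow> ('i \<Rightarrow> 'i \<Rightarrow> 'v \<Rightarrow> 'v) \<Rightarrow> ('i \<Rightarrow> 'i \<Rightarrow> 'v \<Rightarrow> 'v) \<Rightarrow> bool" where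
  "direct I le M tr emb prj \<longleftrightarrow> factor_system I le M tr emb prj \<and>
     (\<forall>i\<in>I. \<forall>i'\<in>I. le i i' \<longrightarrow>
        (\<forall>a'\<in>M i'. \<forall>a\<in>M i. tr i' i a' a \<longleftrightarrow> sim I le M tr i' a' i' (emb i i' a)))"

definition inverse_fs :: "'i set \<Rightarrow> ('i \<Rightarrow> 'i \<Rightarrow> bool) \<Rightarrow> ('i \<Rightarrow> 'v set) \<Rightarrow>
    ('i \<Rightarrow> 'i \<Rightarrow> 'v \<Rightarrow> 'v \<Rightarrow> bool) \<Rightarrow> ('i \<Rightarrow> 'i \<Rightarrow> 'v \<Rightarrow> 'v) \<Rightarrow> ('i \<Rightarrow> 'i \<Rightarrow> 'v \<Rightarrow> 'v) \<Rightarrow> bool" where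
  "inverse_fs I le M tr emb prj \<longleftrightarrow> factor_system I le M tr emb prj \<and>
     (\<forall>i\<in>I. \<forall>i'\<in>I. le i i' \<longrightarrow>
        (\<forall>a'\<in>M i'. \<forall>a\<in>M i. tr i' i a' a \<longleftrightarrow> sim I le M tr i (prj i' i a') i a))"

text \<open>ntr a i x means a \<triangleright> x_i for a target element a and a state x at index i.\<close>
definition target :: "('i set \<Rightarrow> ('i \<Rightarrow> 'i \<Rightarrow> bool) \<Rightarrow> 'i set set) \<Rightarrow>
    'i set \<Rightarrow> ('i \<Rightarrow> 'i \<Rightarrow> bool) \<Rightarrow> ('i \<Rightarrow> 'v set) \<Rightarrow> ('i \<Rightarrow> 'i \<Rightarrow> 'v \<Rightarrow> 'v \<Rightarrow> bool) \<Rightarrow>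
    'w set \<Rightarrow> ('w \<Rightarrow> 'i \<Rightarrow> 'v \<Rightarrow> bool) \<Rightarrow> bool" where
  "target F I le M tr N ntr \<longleftrightarrow>
     (\<forall>a\<in>N. \<forall>i x. ntr a i x \<longrightarrow> i \<in> I \<and> x \<in> M i) \<and>
     (\<forall>a\<in>N. {i\<in>I. \<exists>x\<in>M i. ntr a i x} \<in> F I le) \<and>
     (\<forall>a\<in>N. \<forall>i\<in>I. \<forall>i'\<in>I. le i i' \<longrightarrow>
        (\<forall>x'\<in>M i'. \<forall>x\<in>M i. ntr a i' x' \<and> ntr a i x \<longrightarrow> tr i' i x' x))"

definition is_limit :: "('i set \<Rightarrow> ('i \<Rightarrow> 'i \<Rightarrow> bool) \<Rightarrow> 'i set set) \<Rightarrow>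
    'i set \<Rightarrow> ('i \<Rightarrow> 'i \<Rightarrow> bool) \<Rightarrow> ('i \<Rightarrow> 'v set) \<Rightarrow> ('i \<Rightarrow> 'i \<Rightarrow> 'v \<Rightarrow> 'v \<Rightarrow> bool) \<Rightarrow>
    'v set \<Rightarrow> ('v \<Rightarrow> 'i \<Rightarrow> 'v \<Rightarrow> bool) \<Rightarrow> bool" where
  "is_limit F I le M tr L ltr \<longleftrightarrow> target F I le M tr L ltr \<and>
     (\<forall>(N::'v set) ntr. target F I le M tr N ntr \<longrightarrow>
        (\<exists>\<Phi>. \<Phi> \<in> N \<rightarrow> L \<and> (\<forall>b\<in>N. \<forall>i x. ntr b i x \<longrightarrow> ltr (\<Phi> b) i x) \<and>
           (\<forall>\<Psi>. \<Psi> \<in> N \<rightarrow> L \<and> (\<forall>b\<in>N. \<forall>i x. ntr b i x \<longrightarrow> ltr (\<Psi> b) i x) \<longrightarrow>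
              (\<forall>b\<in>N. \<Psi> b = \<Phi> b))))"

datatype 'b sty = Prop | Base 'b | Arr "'b sty" "'b sty"

fun pos_ty :: "'b sty \<Rightarrow> bool" and neg_ty :: "'b sty \<Rightarrow> bool" where
  "pos_ty Prop = True"
| "pos_ty (Base b) = True"
| "pos_ty (Arr r s) = (neg_ty r \<and> pos_ty s)"
| "neg_ty Prop = True"
| "neg_ty (Base b) = False"
| "neg_ty (Arr r s) = (pos_ty r \<and> neg_ty s)"

fun Idx :: "('b \<Rightarrow> 'a set) \<Rightarrow> 'b sty \<Rightarrow> 'a ix set" where
  "Idx ib Prop = {IProp}"
| "Idx ib (Base b) = IBase ` ib b"
| "Idx ib (Arr r s) = pair_set (Idx ib r) (Idx ib s)"

fun base_le :: "('a \<Rightarrow> 'a \<Rightarrow> bool) \<Rightarrow> 'a ix \<Rightarrow> 'a ix \<Rightarrow> bool" where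
  "base_le le (IBase x) (IBase y) = le x y"
| "base_le le _ _ = False"

fun Le :: "('b \<Rightarrow> 'a \<Rightarrow> 'a \<Rightarrow> bool) \<Rightarrow> 'b sty \<Rightarrow> 'a ix \<Rightarrow> 'a ix \<Rightarrow> bool" where
  "Le leb Prop = (\<lambda>i j. i = IProp \<and> j = IProp)"
| "Le leb (Base b) = base_le (leb b)"
| "Le leb (Arr r s) = pair_le (Le leb r) (Le leb s)"

text \<open>All states and limit elements live in one universe 'v; an element v encodes a
  function via app v (restricted to the relevant domain). Functions between state sets
  and between limits are represented faithfully via bijective encodings.\<close>
record ('a, 'b, 'v) interp =
  ib  :: "'b \<Rightarrow> 'a set"
  leb :: "'b \<Rightarrow> 'a \<Rightarrow> 'a \<Rightarrow> bool"
  st  :: "'b sty \<Rightarrow> 'a ix \<Rightarrow> 'v set"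
  tr  :: "'b sty \<Rightarrow> 'a ix \<Rightarrow> 'a ix \<Rightarrow> 'v \<Rightarrow> 'v \<Rightarrow> bool"
  emb :: "'b sty \<Rightarrow> 'a ix \<Rightarrow> 'a ix \<Rightarrow> 'v \<Rightarrow> 'v"
  prj :: "'b sty \<Rightarrow> 'a ix \<Rightarrow> 'a ix \<Rightarrow> 'v \<Rightarrow> 'v"
  lim :: "'b sty \<Rightarrow> 'v set"
  ltr :: "'b sty \<Rightarrow> 'v \<Rightarrow> 'a ix \<Rightarrow> 'v \<Rightarrow> bool"
  app :: "'v \<Rightarrow> 'v \<Rightarrow> 'v"
  tt  :: 'v
  ff  :: 'v

abbreviation I\<^sub>T where "I\<^sub>T J \<rho> \<equiv> Idx (ib J) \<rho>"
abbreviation le\<^sub>T where "le\<^sub>T J \<rho> \<equiv> Le (leb J) \<rho>"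
abbreviation sim\<^sub>T where "sim\<^sub>T J \<rho> \<equiv> sim (I\<^sub>T J \<rho>) (le\<^sub>T J \<rho>) (st J \<rho>) (tr J \<rho>)"

definition sim_pres :: "('a, 'b, 'v, 'z) interp_scheme \<Rightarrow> 'b sty \<Rightarrow> 'b sty \<Rightarrow> 'a ix \<Rightarrow> 'a ix \<Rightarrow> ('v \<Rightarrow> 'v) set" where
  "sim_pres J r s i j = {f \<in> st J r i \<rightarrow>\<^sub>E st J s j.
      \<forall>a\<in>st J r i. \<forall>b\<in>st J r i. sim\<^sub>T J r i a i b \<longrightarrow> sim\<^sub>T J s j (f a) j (f b)}"

definition fs_ltr :: "('a, 'b, 'v, 'z) interp_scheme \<Rightarrow> 'b sty \<Rightarrow> 'b sty \<Rightarrow> ('v \<Rightarrow> 'v) \<Rightarrow> 'a ix \<Rightarrow> 'a ix \<Rightarrow> 'v \<Rightarrow> bool" where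
  "fs_ltr J r s f i j g \<longleftrightarrow>
     (\<forall>a\<in>lim J r. \<forall>x\<in>st J r i. ltr J r a i x \<longrightarrow> ltr J s (f a) j (app J g x))"

definition fs_Ind :: "('a, 'b, 'v, 'z) interp_scheme \<Rightarrow> 'b sty \<Rightarrow> 'b sty \<Rightarrow> ('v \<Rightarrow> 'v) \<Rightarrow> 'a ix set" where
  "fs_Ind J r s f = {IPair i j | i j. i \<in> I\<^sub>T J r \<and> j \<in> I\<^sub>T J s \<and>
      (\<exists>g\<in>st J (Arr r s) (IPair i j). fs_ltr J r s f i j g)}"

definition interpretation_of_types ::
  "('a ix set \<Rightarrow> ('a ix \<Rightarrow> 'a ix \<Rightarrow> bool) \<Rightarrow> 'a ix set set) \<Rightarrow> ('a, 'b, 'v, 'z) interp_scheme \<Rightarrow> bool" where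
  "interpretation_of_types F J \<longleftrightarrow>
     \<comment> \<open>every type gets a factor system over its index set, and a limit of it\<close>
     (\<forall>b. directed_preorder (ib J b) (leb J b)) \<and>
     (\<forall>\<rho>. factor_system (I\<^sub>T J \<rho>) (le\<^sub>T J \<rho>) (st J \<rho>) (tr J \<rho>) (emb J \<rho>) (prj J \<rho>)) \<and>
     (\<forall>\<rho>. is_limit F (I\<^sub>T J \<rho>) (le\<^sub>T J \<rho>) (st J \<rho>) (tr J \<rho>) (lim J \<rho>) (ltr J \<rho>)) \<and>
     \<comment> \<open>base types are direct\<close>
     (\<forall>b. direct (I\<^sub>T J (Base b)) (le\<^sub>T J (Base b)) (st J (Base b)) (tr J (Base b))
                 (emb J (Base b)) (prj J (Base b))) \<and>
     \<comment> \<open>prop\<close>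
     tt J \<noteq> ff J \<and>
     st J Prop IProp = {tt J, ff J} \<and>
     (\<forall>a\<in>{tt J, ff J}. \<forall>b\<in>{tt J, ff J}. tr J Prop IProp IProp a b \<longleftrightarrow> a = b) \<and>
     lim J Prop = {tt J, ff J} \<and>
     (\<forall>a\<in>{tt J, ff J}. \<forall>i x. ltr J Prop a i x \<longleftrightarrow> i = IProp \<and> x \<in> {tt J, ff J} \<and> a = x) \<and>
     \<comment> \<open>arrow types: the function-space factor system\<close>
     (\<forall>r s. \<forall>i\<in>I\<^sub>T J r. \<forall>j\<in>I\<^sub>T J s.
        bij_betw (\<lambda>v. restrict (app J v) (st J r i)) (st J (Arr r s) (IPair i j)) (sim_pres J r s i j)) \<and>
     (\<forall>r s. \<forall>i\<in>I\<^sub>T J r. \<forall>i'\<in>I\<^sub>T J r. \<forall>j\<in>I\<^sub>T J s. \<forall>j'\<in>I\<^sub>T J s.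
        le\<^sub>T J r i i' \<and> le\<^sub>T J s j j' \<longrightarrow>
        (\<forall>f'\<in>st J (Arr r s) (IPair i' j'). \<forall>f\<in>st J (Arr r s) (IPair i j).
           tr J (Arr r s) (IPair i' j') (IPair i j) f' f \<longleftrightarrow>
           (\<forall>a'\<in>st J r i'. \<forall>a\<in>st J r i. tr J r i' i a' a \<longrightarrow> tr J s j' j (app J f' a') (app J f a))) \<and>
        (\<forall>f\<in>st J (Arr r s) (IPair i j).
           emb J (Arr r s) (IPair i j) (IPair i' j') f \<in> st J (Arr r s) (IPair i' j') \<and>
           (\<forall>a\<in>st J r i'. app J (emb J (Arr r s) (IPair i j) (IPair i' j') f) a
                            = emb J s j j' (app J f (prj J r i' i a)))) \<and>
        (\<forall>f'\<in>st J (Arr r s) (IPair i' j').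
           prj J (Arr r s) (IPair i' j') (IPair i j) f' \<in> st J (Arr r s) (IPair i j) \<and>
           (\<forall>a\<in>st J r i. app J (prj J (Arr r s) (IPair i' j') (IPair i j) f') a
                            = prj J s j' j (app J f' (emb J r i i' a))))) \<and>
     \<comment> \<open>arrow types: the limit [M \<rightarrow>_F N]\<close>
     (\<forall>r s. bij_betw (\<lambda>v. restrict (app J v) (lim J r)) (lim J (Arr r s))
              {f \<in> lim J r \<rightarrow>\<^sub>E lim J s. fs_Ind J r s f \<in> F (I\<^sub>T J (Arr r s)) (le\<^sub>T J (Arr r s))}) \<and>
     (\<forall>r s. \<forall>v\<in>lim J (Arr r s). \<forall>k g. ltr J (Arr r s) v k g \<longleftrightarrow>
        (\<exists>i j. k = IPair i j \<and> i \<in> I\<^sub>T J r \<and> j \<in> I\<^sub>T J s \<and>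
               g \<in> st J (Arr r s) (IPair i j) \<and> fs_ltr J r s (app J v) i j g))"

end

theory Submission
  imports Defs
begin

(* By induction on the type: for \<rho> \<rightarrow> \<sigma> with \<rho> inverse and \<sigma> direct, both f' \<triangleright> f and
  f' \<approx> emb f unfold to the pointwise condition f'(a') \<approx> emb (f (proj a')); dually, for \<rho> direct
  and \<sigma> inverse, both f' \<triangleright> f and proj f' \<approx> f unfold to proj (f'(emb a)) \<approx> f a.
  For the limits: the relation of a limit L cannot be properly enlarged while L stays a target,
  since the identity is the only mediating map from L to itself. Adding to a \<triangleright> _ every state
  \<approx> to an embedding of a state below that a dominates (dually, to a projection of a state above)
  keeps the target conditions. Coherence is checked at a larger index k with some a \<triangleright> z_k,
  which exists because the members of the filter are cofinal, and uses that embeddings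
  reflect \<approx> (proj \<circ> emb \<approx> id). *)

lemma filter_assignment_cofinal:
  "\<lbrakk>filter_assignment F; directed_preorder I le; H \<in> F I le\<rbrakk> \<Longrightarrow> cofinal I le H"
  unfolding filter_assignment_def by auto

lemma filter_assignment_superset:
  "\<lbrakk>filter_assignment F; directed_preorder I le; H \<in> F I le; H \<subseteq> H'; H' \<subseteq> I\<rbrakk> \<Longrightarrow> H' \<in> F I le"
  unfolding filter_assignment_def by auto

lemma is_limit_target: "is_limit F I le M T L R \<Longrightarrow> target F I le M T L R"
  by (simp add: is_limit_def)

lemma is_limit_universal:
  fixes L N :: "'v set"
  assumes "is_limit F I le M T L R" and "target F I le M T N ntr"
  shows "\<exists>\<Phi>. \<Phi> \<in> N \<rightarrow> L \<and> (\<forall>b\<in>N. \<forall>i x. ntr b i x \<longrightarrow> R (\<Phi> b) i x) \<and>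
           (\<forall>\<Psi>. \<Psi> \<in> N \<rightarrow> L \<and> (\<forall>b\<in>N. \<forall>i x. ntr b i x \<longrightarrow> R (\<Psi> b) i x) \<longrightarrow> (\<forall>b\<in>N. \<Psi> b = \<Phi> b))"
  using assms unfolding is_limit_def by blast

locale factor_sys =
  fixes I :: "'a ix set" and le :: "'a ix \<Rightarrow> 'a ix \<Rightarrow> bool" and M :: "'a ix \<Rightarrow> 'v set"
    and T :: "'a ix \<Rightarrow> 'a ix \<Rightarrow> 'v \<Rightarrow> 'v \<Rightarrow> bool" and E P :: "'a ix \<Rightarrow> 'a ix \<Rightarrow> 'v \<Rightarrow> 'v"
  assumes factor_system: "factor_system I le M T E P"
begin

abbreviation eqv :: "'a ix \<Rightarrow> 'v \<Rightarrow> 'v \<Rightarrow> bool" where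
  "eqv i a b \<equiv> sim I le M T i a i b"

lemma directed: "directed_preorder I le"
  using factor_system unfolding factor_system_def prefactor_system_def system_def by blast

lemma le_refl: "i \<in> I \<Longrightarrow> le i i"
  using directed unfolding directed_preorder_def by blast

lemma le_trans: "\<lbrakk>i \<in> I; j \<in> I; k \<in> I; le i j; le j k\<rbrakk> \<Longrightarrow> le i k"
  using directed unfolding directed_preorder_def by blast

lemma upper_bound:
  assumes "i \<in> I" "j \<in> I"
  obtains k where "k \<in> I" "le i k" "le j k"
  using assms directed unfolding directed_preorder_def by blast

lemma sim_iff_T:
  "\<lbrakk>i \<in> I; i' \<in> I; le i i'; a' \<in> M i'; a \<in> M i\<rbrakk> \<Longrightarrow> sim I le M T i' a' i a \<longleftrightarrow> T i' i a' a"
  using factor_system unfolding factor_system_def prefactor_system_def by auto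

lemma eqv_iff_T: "\<lbrakk>i \<in> I; a \<in> M i; b \<in> M i\<rbrakk> \<Longrightarrow> eqv i a b \<longleftrightarrow> T i i a b"
  using sim_iff_T le_refl by blast

lemma T_refl: "\<lbrakk>i \<in> I; a \<in> M i\<rbrakk> \<Longrightarrow> T i i a a"
  using factor_system unfolding factor_system_def prefactor_system_def system_def by auto

lemma eqv_refl: "\<lbrakk>i \<in> I; a \<in> M i\<rbrakk> \<Longrightarrow> eqv i a a"
  using eqv_iff_T T_refl by blast

lemma eqv_sym: "eqv i a b \<Longrightarrow> eqv i b a"
  unfolding sim_def by blast

lemma eqv_trans:
  assumes "i \<in> I" "a \<in> M i" "b \<in> M i" "c \<in> M i" "eqv i a b" "eqv i b c"
  shows "eqv i a c"
proof -
  have "T i i b a" "T i i b c"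
    using assms eqv_sym eqv_iff_T by blast+
  then show ?thesis
    unfolding sim_def using assms le_refl by blast
qed

lemma emb_in: "\<lbrakk>i \<in> I; i' \<in> I; le i i'; a \<in> M i\<rbrakk> \<Longrightarrow> E i i' a \<in> M i'"
  using factor_system unfolding factor_system_def by auto

lemma prj_in: "\<lbrakk>i \<in> I; i' \<in> I; le i i'; a \<in> M i'\<rbrakk> \<Longrightarrow> P i' i a \<in> M i"
  using factor_system unfolding factor_system_def by auto

lemma emb_eqv:
  "\<lbrakk>i \<in> I; i' \<in> I; le i i'; a \<in> M i; b \<in> M i; eqv i a b\<rbrakk> \<Longrightarrow> eqv i' (E i i' a) (E i i' b)"
  using factor_system unfolding factor_system_def by auto

lemma prj_eqv:
  "\<lbrakk>i \<in> I; i' \<in> I; le i i'; a \<in> M i'; b \<in> M i'; eqv i' a b\<rbrakk> \<Longrightarrow> eqv i (P i' i a) (P i' i b)"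
  using factor_system unfolding factor_system_def by auto

lemma prj_emb: "\<lbrakk>i \<in> I; i' \<in> I; le i i'; a \<in> M i\<rbrakk> \<Longrightarrow> eqv i (P i' i (E i i' a)) a"
  using factor_system unfolding factor_system_def by auto

lemma emb_self: "\<lbrakk>i \<in> I; a \<in> M i\<rbrakk> \<Longrightarrow> eqv i (E i i a) a"
  using factor_system unfolding factor_system_def by auto

lemma prj_self: "\<lbrakk>i \<in> I; a \<in> M i\<rbrakk> \<Longrightarrow> eqv i (P i i a) a"
  using factor_system unfolding factor_system_def by auto

lemma emb_emb:
  "\<lbrakk>i \<in> I; i' \<in> I; i'' \<in> I; le i i'; le i' i''; a \<in> M i\<rbrakk> \<Longrightarrow>
   eqv i'' (E i' i'' (E i i' a)) (E i i'' a)"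
  using factor_system unfolding factor_system_def by auto

lemma prj_prj:
  "\<lbrakk>i \<in> I; i' \<in> I; i'' \<in> I; le i i'; le i' i''; a \<in> M i''\<rbrakk> \<Longrightarrow>
   eqv i (P i' i (P i'' i' a)) (P i'' i a)"
  using factor_system unfolding factor_system_def by auto

lemma emb_eqv_iff:
  assumes "i \<in> I" "i' \<in> I" "le i i'" "a \<in> M i" "b \<in> M i"
  shows "eqv i' (E i i' a) (E i i' b) \<longleftrightarrow> eqv i a b"
proof
  assume "eqv i' (E i i' a) (E i i' b)"
  then have "eqv i (P i' i (E i i' a)) (P i' i (E i i' b))"
    using assms prj_eqv emb_in by blast
  moreover have "eqv i (P i' i (E i i' a)) a" "eqv i (P i' i (E i i' b)) b"
    using assms prj_emb by blast+
  ultimately show "eqv i a b"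
    using assms eqv_trans eqv_sym prj_in emb_in by meson
qed (use assms emb_eqv in blast)

lemma direct_T_iff:
  "\<lbrakk>direct I le M T E P; i \<in> I; i' \<in> I; le i i'; a' \<in> M i'; a \<in> M i\<rbrakk> \<Longrightarrow>
   T i' i a' a \<longleftrightarrow> eqv i' a' (E i i' a)"
  unfolding direct_def by blast

lemma inverse_T_iff:
  "\<lbrakk>inverse_fs I le M T E P; i \<in> I; i' \<in> I; le i i'; a' \<in> M i'; a \<in> M i\<rbrakk> \<Longrightarrow>
   T i' i a' a \<longleftrightarrow> eqv i (P i' i a') a"
  unfolding inverse_fs_def by blast

lemma direct_if_discrete:
  assumes "\<And>i i'. \<lbrakk>i \<in> I; i' \<in> I; le i i'\<rbrakk> \<Longrightarrow> i = i'"
  shows "direct I le M T E P"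
  unfolding direct_def
proof (intro conjI factor_system ballI impI)
  fix i i' a' a assume "i \<in> I" "i' \<in> I" "le i i'" "a' \<in> M i'" "a \<in> M i"
  moreover from this have "i' = i" "eqv i (E i i a) a" "E i i a \<in> M i"
    using assms emb_self emb_in le_refl by blast+
  ultimately show "T i' i a' a \<longleftrightarrow> eqv i' a' (E i i' a)"
    using eqv_iff_T eqv_trans eqv_sym by metis
qed

lemma inverse_if_discrete:
  assumes "\<And>i i'. \<lbrakk>i \<in> I; i' \<in> I; le i i'\<rbrakk> \<Longrightarrow> i = i'"
  shows "inverse_fs I le M T E P"
  unfolding inverse_fs_def
proof (intro conjI factor_system ballI impI)
  fix i i' a' a assume "i \<in> I" "i' \<in> I" "le i i'" "a' \<in> M i'" "a \<in> M i"
  moreover from this have "i' = i" "eqv i (P i i a') a'" "P i i a' \<in> M i"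
    using assms prj_self prj_in le_refl by blast+
  ultimately show "T i' i a' a \<longleftrightarrow> eqv i (P i' i a') a"
    using eqv_iff_T eqv_trans eqv_sym by metis
qed

lemma target_cofinal:
  assumes "filter_assignment F" "target F I le M T L R" "a \<in> L" "m \<in> I"
  obtains k z where "k \<in> I" "le m k" "z \<in> M k" "R a k z"
proof -
  have "{k \<in> I. \<exists>z\<in>M k. R a k z} \<in> F I le"
    using assms(2,3) unfolding target_def by blast
  then have "cofinal I le {k \<in> I. \<exists>z\<in>M k. R a k z}"
    using filter_assignment_cofinal[OF assms(1) directed] by blast
  then show thesis
    using that assms(4) unfolding cofinal_def by blast
qed

lemma target_coherent:
  "\<lbrakk>target F I le M T L R; a \<in> L; i \<in> I; i' \<in> I; le i i'; x' \<in> M i'; x \<in> M i; R a i' x'; R a i x\<rbrakk> \<Longrightarrow>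
   T i' i x' x"
  unfolding target_def by blast

lemma target_typed:
  "\<lbrakk>target F I le M T L R; a \<in> L; R a i x\<rbrakk> \<Longrightarrow> i \<in> I \<and> x \<in> M i"
  unfolding target_def by blast

lemma limit_saturated:
  assumes F: "filter_assignment F" and lim: "is_limit F I le M T L R"
    and ext: "\<And>b j y. \<lbrakk>b \<in> L; R b j y\<rbrakk> \<Longrightarrow> R' b j y"
    and typed: "\<And>b j y. \<lbrakk>b \<in> L; R' b j y\<rbrakk> \<Longrightarrow> j \<in> I \<and> y \<in> M j"
    and coherent: "\<And>b j j' y' y. \<lbrakk>b \<in> L; j \<in> I; j' \<in> I; le j j'; y' \<in> M j'; y \<in> M j;
                     R' b j' y'; R' b j y\<rbrakk> \<Longrightarrow> T j' j y' y"
    and a: "a \<in> L" "R' a j x"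
  shows "R a j x"
proof -
  have target: "target F I le M T L R"
    using lim by (rule is_limit_target)
  have "target F I le M T L R'"
    unfolding target_def
  proof (intro conjI ballI)
    fix b assume b: "b \<in> L"
    have "{j \<in> I. \<exists>y\<in>M j. R b j y} \<in> F I le"
      using target b by (simp add: target_def)
    then show "{j \<in> I. \<exists>y\<in>M j. R' b j y} \<in> F I le"
      by (rule filter_assignment_superset[OF F directed]) (use ext[OF b] in auto)
  qed (use typed coherent in auto)
  then obtain \<Phi> where \<Phi>: "\<Phi> \<in> L \<rightarrow> L" "\<forall>b\<in>L. \<forall>j y. R' b j y \<longrightarrow> R (\<Phi> b) j y"
    using is_limit_universal[OF lim] by blast
  obtain \<Phi>\<^sub>0 where unique: "\<And>\<Psi>. \<lbrakk>\<Psi> \<in> L \<rightarrow> L; \<forall>b\<in>L. \<forall>j y. R b j y \<longrightarrow> R (\<Psi> b) j y\<rbrakk> \<Longrightarrow>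
      \<forall>b\<in>L. \<Psi> b = \<Phi>\<^sub>0 b"
    using is_limit_universal[OF lim target] by blast
  have "\<forall>b\<in>L. id b = \<Phi>\<^sub>0 b"
    by (rule unique) auto
  moreover have "\<forall>b\<in>L. \<Phi> b = \<Phi>\<^sub>0 b"
    by (rule unique) (use \<Phi> ext in auto)
  ultimately have "\<Phi> a = a"
    using a by simp
  then show ?thesis
    using \<Phi>(2) a by metis
qed

definition emb_closure :: "('w \<Rightarrow> 'a ix \<Rightarrow> 'v \<Rightarrow> bool) \<Rightarrow> 'w \<Rightarrow> 'a ix \<Rightarrow> 'v \<Rightarrow> bool" where
  "emb_closure R b j y \<longleftrightarrow> j \<in> I \<and> y \<in> M j \<and>
     (\<exists>i\<^sub>0\<in>I. le i\<^sub>0 j \<and> (\<exists>y\<^sub>0\<in>M i\<^sub>0. R b i\<^sub>0 y\<^sub>0 \<and> eqv j y (E i\<^sub>0 j y\<^sub>0)))"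

definition prj_closure :: "('w \<Rightarrow> 'a ix \<Rightarrow> 'v \<Rightarrow> bool) \<Rightarrow> 'w \<Rightarrow> 'a ix \<Rightarrow> 'v \<Rightarrow> bool" where
  "prj_closure R b j y \<longleftrightarrow> j \<in> I \<and> y \<in> M j \<and>
     (\<exists>i\<^sub>0\<in>I. le j i\<^sub>0 \<and> (\<exists>y\<^sub>0\<in>M i\<^sub>0. R b i\<^sub>0 y\<^sub>0 \<and> eqv j y (P i\<^sub>0 j y\<^sub>0)))"

lemma emb_closure_emb_eqv:
  assumes dir: "direct I le M T E P" and target: "target F I le M T L R"
    and b: "b \<in> L" and cl: "emb_closure R b j y"
    and k: "k \<in> I" "le j k" "z \<in> M k" "R b k z"
  shows "eqv k (E j k y) z"
proof -
  obtain i\<^sub>0 y\<^sub>0 where i\<^sub>0: "i\<^sub>0 \<in> I" "le i\<^sub>0 j" "y\<^sub>0 \<in> M i\<^sub>0" "R b i\<^sub>0 y\<^sub>0"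
    and y: "j \<in> I" "y \<in> M j" "eqv j y (E i\<^sub>0 j y\<^sub>0)"
    using cl unfolding emb_closure_def by blast
  have i\<^sub>0k: "le i\<^sub>0 k"
    using le_trans i\<^sub>0 y k by blast
  have "T k i\<^sub>0 z y\<^sub>0"
    using target_coherent[OF target b i\<^sub>0(1) k(1) i\<^sub>0k k(3) i\<^sub>0(3) k(4) i\<^sub>0(4)] .
  then have "eqv k z (E i\<^sub>0 k y\<^sub>0)"
    using direct_T_iff[OF dir i\<^sub>0(1) k(1) i\<^sub>0k k(3) i\<^sub>0(3)] by blast
  moreover have "eqv k (E j k y) (E j k (E i\<^sub>0 j y\<^sub>0))"
    using emb_eqv[OF y(1) k(1,2) y(2) emb_in[OF i\<^sub>0(1) y(1) i\<^sub>0(2,3)] y(3)] .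
  moreover have "eqv k (E j k (E i\<^sub>0 j y\<^sub>0)) (E i\<^sub>0 k y\<^sub>0)"
    using emb_emb[OF i\<^sub>0(1) y(1) k(1) i\<^sub>0(2) k(2) i\<^sub>0(3)] .
  moreover have "E j k y \<in> M k" "E j k (E i\<^sub>0 j y\<^sub>0) \<in> M k" "E i\<^sub>0 k y\<^sub>0 \<in> M k"
    using emb_in i\<^sub>0 y k i\<^sub>0k by blast+
  ultimately show ?thesis
    using eqv_trans[OF k(1)] eqv_sym k(3) by metis
qed

lemma emb_closure_coherent:
  assumes F: "filter_assignment F" and dir: "direct I le M T E P" and target: "target F I le M T L R"
    and b: "b \<in> L" and j: "j \<in> I" "j' \<in> I" "le j j'" and y: "y' \<in> M j'" "y \<in> M j"
    and cl: "emb_closure R b j' y'" "emb_closure R b j y"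
  shows "T j' j y' y"
proof -
  obtain k z where k: "k \<in> I" "le j' k" "z \<in> M k" "R b k z"
    using target_cofinal[OF F target b j(2)] .
  have jk: "le j k"
    using le_trans j k by blast
  have "eqv k (E j' k y') z" "eqv k (E j k y) z"
    using emb_closure_emb_eqv[OF dir target b cl(1) k] emb_closure_emb_eqv[OF dir target b cl(2) k(1) jk k(3,4)] .
  moreover have "eqv k (E j' k (E j j' y)) (E j k y)"
    using emb_emb[OF j(1,2) k(1) j(3) k(2) y(2)] .
  moreover have "E j' k y' \<in> M k" "E j' k (E j j' y) \<in> M k" "E j k y \<in> M k"
    using emb_in j y k jk by blast+
  ultimately have "eqv k (E j' k y') (E j' k (E j j' y))"
    using eqv_trans[OF k(1)] eqv_sym k(3) by metis
  then show ?thesis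
    using emb_eqv_iff[OF j(2) k(1,2) y(1)] direct_T_iff[OF dir j y] emb_in[OF j y(2)] by blast
qed

lemma direct_limit_emb:
  assumes F: "filter_assignment F" and dir: "direct I le M T E P" and lim: "is_limit F I le M T L R"
    and i: "i \<in> I" "i' \<in> I" "le i i'" and a: "a \<in> L" "x \<in> M i" "R a i x"
  shows "R a i' (E i i' x)"
proof -
  have target: "target F I le M T L R"
    using lim by (rule is_limit_target)
  have ext: "emb_closure R b j y" if "b \<in> L" "R b j y" for b j y
    unfolding emb_closure_def using that target_typed[OF target] emb_self eqv_sym le_refl by blast
  have a_cl: "emb_closure R a i' (E i i' x)"
    unfolding emb_closure_def using i a emb_in eqv_refl by blast
  show ?thesis
    by (rule limit_saturated[where R' = "emb_closure R",
          OF F lim ext _ emb_closure_coherent[OF F dir target] a(1) a_cl])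
      (auto simp: emb_closure_def)
qed

lemma prj_closure_eqv_prj:
  assumes inv: "inverse_fs I le M T E P" and target: "target F I le M T L R"
    and b: "b \<in> L" and cl: "prj_closure R b j y"
  obtains i\<^sub>0 where "i\<^sub>0 \<in> I" "le j i\<^sub>0"
    "\<And>k z. \<lbrakk>k \<in> I; le i\<^sub>0 k; z \<in> M k; R b k z\<rbrakk> \<Longrightarrow> eqv j y (P k j z)"
proof -
  obtain i\<^sub>0 y\<^sub>0 where i\<^sub>0: "i\<^sub>0 \<in> I" "le j i\<^sub>0" "y\<^sub>0 \<in> M i\<^sub>0" "R b i\<^sub>0 y\<^sub>0"
    and y: "j \<in> I" "y \<in> M j" "eqv j y (P i\<^sub>0 j y\<^sub>0)"
    using cl unfolding prj_closure_def by blast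
  have "eqv j y (P k j z)" if k: "k \<in> I" "le i\<^sub>0 k" "z \<in> M k" "R b k z" for k z
  proof -
    have "T k i\<^sub>0 z y\<^sub>0"
      using target_coherent[OF target b i\<^sub>0(1) k(1,2,3) i\<^sub>0(3) k(4) i\<^sub>0(4)] .
    then have "eqv i\<^sub>0 (P k i\<^sub>0 z) y\<^sub>0"
      using inverse_T_iff[OF inv i\<^sub>0(1) k(1,2,3) i\<^sub>0(3)] by blast
    then have "eqv j (P i\<^sub>0 j (P k i\<^sub>0 z)) (P i\<^sub>0 j y\<^sub>0)"
      using prj_eqv[OF y(1) i\<^sub>0(1,2) prj_in[OF i\<^sub>0(1) k(1,2,3)] i\<^sub>0(3)] by blast
    moreover have "eqv j (P i\<^sub>0 j (P k i\<^sub>0 z)) (P k j z)"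
      using prj_prj[OF y(1) i\<^sub>0(1) k(1) i\<^sub>0(2) k(2,3)] .
    moreover have "P i\<^sub>0 j (P k i\<^sub>0 z) \<in> M j" "P i\<^sub>0 j y\<^sub>0 \<in> M j" "P k j z \<in> M j"
      using prj_in[OF y(1) i\<^sub>0(1,2)] prj_in[OF i\<^sub>0(1) k(1,2,3)] i\<^sub>0(3)
        prj_in[OF y(1) k(1) le_trans[OF y(1) i\<^sub>0(1) k(1) i\<^sub>0(2) k(2)] k(3)] by blast+
    ultimately show ?thesis
      using eqv_trans[OF y(1)] eqv_sym y(2,3) by metis
  qed
  then show thesis
    using that i\<^sub>0(1,2) by blast
qed

lemma prj_closure_coherent:
  assumes F: "filter_assignment F" and inv: "inverse_fs I le M T E P" and target: "target F I le M T L R"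
    and b: "b \<in> L" and j: "j \<in> I" "j' \<in> I" "le j j'" and y: "y' \<in> M j'" "y \<in> M j"
    and cl: "prj_closure R b j' y'" "prj_closure R b j y"
  shows "T j' j y' y"
proof -
  obtain i\<^sub>1 where i\<^sub>1: "i\<^sub>1 \<in> I" "le j' i\<^sub>1"
    and y'_P: "\<And>k z. \<lbrakk>k \<in> I; le i\<^sub>1 k; z \<in> M k; R b k z\<rbrakk> \<Longrightarrow> eqv j' y' (P k j' z)"
    using prj_closure_eqv_prj[OF inv target b cl(1)] by blast
  obtain i\<^sub>0 where i\<^sub>0: "i\<^sub>0 \<in> I" "le j i\<^sub>0"
    and y_P: "\<And>k z. \<lbrakk>k \<in> I; le i\<^sub>0 k; z \<in> M k; R b k z\<rbrakk> \<Longrightarrow> eqv j y (P k j z)"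
    using prj_closure_eqv_prj[OF inv target b cl(2)] by blast
  obtain m where m: "m \<in> I" "le i\<^sub>0 m" "le i\<^sub>1 m"
    using upper_bound[OF i\<^sub>0(1) i\<^sub>1(1)] .
  obtain k z where k: "k \<in> I" "le m k" "z \<in> M k" "R b k z"
    using target_cofinal[OF F target b m(1)] .
  have i\<^sub>0k: "le i\<^sub>0 k" and i\<^sub>1k: "le i\<^sub>1 k"
    using le_trans[OF _ m(1) k(1)] i\<^sub>0 i\<^sub>1 m k by blast+
  have jk: "le j' k"
    using le_trans[OF j(2) i\<^sub>1(1) k(1)] i\<^sub>1 i\<^sub>1k by blast
  have "eqv j (P j' j y') (P j' j (P k j' z))"
    using prj_eqv[OF j y(1) prj_in[OF j(2) k(1) jk k(3)]] y'_P[OF k(1) i\<^sub>1k k(3,4)] by blast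
  moreover have "eqv j (P j' j (P k j' z)) (P k j z)"
    using prj_prj[OF j(1,2) k(1) j(3) jk k(3)] .
  moreover have "eqv j y (P k j z)"
    using y_P[OF k(1) i\<^sub>0k k(3,4)] .
  moreover have "P j' j y' \<in> M j" "P j' j (P k j' z) \<in> M j" "P k j z \<in> M j"
    using prj_in j y k jk le_trans[OF j(1,2) k(1) j(3) jk] by blast+
  ultimately have "eqv j (P j' j y') y"
    using eqv_trans[OF j(1)] eqv_sym y(2) by metis
  then show ?thesis
    using inverse_T_iff[OF inv j y] by blast
qed

lemma inverse_limit_prj:
  assumes F: "filter_assignment F" and inv: "inverse_fs I le M T E P" and lim: "is_limit F I le M T L R"
    and i: "i \<in> I" "i' \<in> I" "le i i'" and a: "a \<in> L" "x \<in> M i'" "R a i' x"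
  shows "R a i (P i' i x)"
proof -
  have target: "target F I le M T L R"
    using lim by (rule is_limit_target)
  have ext: "prj_closure R b j y" if "b \<in> L" "R b j y" for b j y
    unfolding prj_closure_def using that target_typed[OF target] prj_self eqv_sym le_refl by blast
  have a_cl: "prj_closure R a i (P i' i x)"
    unfolding prj_closure_def using i a prj_in eqv_refl by blast
  show ?thesis
    by (rule limit_saturated[where R' = "prj_closure R",
          OF F lim ext _ prj_closure_coherent[OF F inv target] a(1) a_cl])
      (auto simp: prj_closure_def)
qed

end

abbreviation eqv\<^sub>T where "eqv\<^sub>T J \<rho> i a b \<equiv> sim\<^sub>T J \<rho> i a i b"

context
  fixes F :: "'a ix set \<Rightarrow> ('a ix \<Rightarrow> 'a ix \<Rightarrow> bool) \<Rightarrow> 'a ix set set"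
    and J :: "('a, 'b, 'v, 'z) interp_scheme"
  assumes J: "interpretation_of_types F J"
begin

lemma factor_sys_type: "factor_sys (I\<^sub>T J \<rho>) (le\<^sub>T J \<rho>) (st J \<rho>) (tr J \<rho>) (emb J \<rho>) (prj J \<rho>)"
  using J unfolding factor_sys_def by (simp add: interpretation_of_types_def)

lemma is_limit_type: "is_limit F (I\<^sub>T J \<rho>) (le\<^sub>T J \<rho>) (st J \<rho>) (tr J \<rho>) (lim J \<rho>) (ltr J \<rho>)"
  using J by (simp add: interpretation_of_types_def)

lemma direct_Base:
  "direct (I\<^sub>T J (Base b)) (le\<^sub>T J (Base b)) (st J (Base b)) (tr J (Base b)) (emb J (Base b)) (prj J (Base b))"
  using J by (simp add: interpretation_of_types_def)

lemma tr_Arr_iff: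
  assumes "i \<in> I\<^sub>T J r" "i' \<in> I\<^sub>T J r" "j \<in> I\<^sub>T J s" "j' \<in> I\<^sub>T J s" "le\<^sub>T J r i i'" "le\<^sub>T J s j j'"
    and "f' \<in> st J (Arr r s) (IPair i' j')" "f \<in> st J (Arr r s) (IPair i j)"
  shows "tr J (Arr r s) (IPair i' j') (IPair i j) f' f \<longleftrightarrow>
    (\<forall>a'\<in>st J r i'. \<forall>a\<in>st J r i. tr J r i' i a' a \<longrightarrow> tr J s j' j (app J f' a') (app J f a))"
  using J assms by (simp add: interpretation_of_types_def)

lemma emb_Arr_app:
  assumes "i \<in> I\<^sub>T J r" "i' \<in> I\<^sub>T J r" "j \<in> I\<^sub>T J s" "j' \<in> I\<^sub>T J s" "le\<^sub>T J r i i'" "le\<^sub>T J s j j'"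
    and "f \<in> st J (Arr r s) (IPair i j)" "a \<in> st J r i'"
  shows "app J (emb J (Arr r s) (IPair i j) (IPair i' j') f) a = emb J s j j' (app J f (prj J r i' i a))"
  using J assms by (simp add: interpretation_of_types_def)

lemma prj_Arr_app:
  assumes "i \<in> I\<^sub>T J r" "i' \<in> I\<^sub>T J r" "j \<in> I\<^sub>T J s" "j' \<in> I\<^sub>T J s" "le\<^sub>T J r i i'" "le\<^sub>T J s j j'"
    and "f' \<in> st J (Arr r s) (IPair i' j')" "a \<in> st J r i"
  shows "app J (prj J (Arr r s) (IPair i' j') (IPair i j) f') a = prj J s j' j (app J f' (emb J r i i' a))"
  using J assms by (simp add: interpretation_of_types_def)

lemma app_sim_pres:
  assumes "i \<in> I\<^sub>T J r" "j \<in> I\<^sub>T J s" "f \<in> st J (Arr r s) (IPair i j)"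
  shows "restrict (app J f) (st J r i) \<in> sim_pres J r s i j"
proof -
  have "bij_betw (\<lambda>v. restrict (app J v) (st J r i)) (st J (Arr r s) (IPair i j)) (sim_pres J r s i j)"
    using J assms by (simp add: interpretation_of_types_def)
  then show ?thesis
    using assms(3) bij_betw_apply by fastforce
qed

lemma app_in: "\<lbrakk>i \<in> I\<^sub>T J r; j \<in> I\<^sub>T J s; f \<in> st J (Arr r s) (IPair i j); a \<in> st J r i\<rbrakk> \<Longrightarrow>
  app J f a \<in> st J s j"
  using app_sim_pres unfolding sim_pres_def by fastforce

lemma app_eqv: "\<lbrakk>i \<in> I\<^sub>T J r; j \<in> I\<^sub>T J s; f \<in> st J (Arr r s) (IPair i j); a \<in> st J r i; b \<in> st J r i;
    eqv\<^sub>T J r i a b\<rbrakk> \<Longrightarrow> eqv\<^sub>T J s j (app J f a) (app J f b)"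
  using app_sim_pres unfolding sim_pres_def by fastforce

lemma Idx_Arr_cases:
  assumes "k \<in> I\<^sub>T J (Arr r s)"
  obtains i j where "k = IPair i j" "i \<in> I\<^sub>T J r" "j \<in> I\<^sub>T J s"
  using assms by (auto simp: pair_set_def)

lemma eqv_Arr_iff:
  assumes i: "i \<in> I\<^sub>T J r" and j: "j \<in> I\<^sub>T J s"
    and f: "f \<in> st J (Arr r s) (IPair i j)" and g: "g \<in> st J (Arr r s) (IPair i j)"
  shows "eqv\<^sub>T J (Arr r s) (IPair i j) f g \<longleftrightarrow> (\<forall>a\<in>st J r i. eqv\<^sub>T J s j (app J f a) (app J g a))"
proof -
  interpret R: factor_sys "I\<^sub>T J r" "le\<^sub>T J r" "st J r" "tr J r" "emb J r" "prj J r"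
    by (rule factor_sys_type)
  interpret S: factor_sys "I\<^sub>T J s" "le\<^sub>T J s" "st J s" "tr J s" "emb J s" "prj J s"
    by (rule factor_sys_type)
  interpret A: factor_sys "I\<^sub>T J (Arr r s)" "le\<^sub>T J (Arr r s)" "st J (Arr r s)" "tr J (Arr r s)"
      "emb J (Arr r s)" "prj J (Arr r s)"
    by (rule factor_sys_type)
  have "IPair i j \<in> I\<^sub>T J (Arr r s)"
    using i j by (simp add: pair_set_def)
  then have "A.eqv (IPair i j) f g \<longleftrightarrow>
      (\<forall>a'\<in>st J r i. \<forall>a\<in>st J r i. tr J r i i a' a \<longrightarrow> tr J s j j (app J f a') (app J g a))"
    using A.eqv_iff_T tr_Arr_iff[OF i i j j R.le_refl[OF i] S.le_refl[OF j] f g] f g by blast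
  also have "\<dots> \<longleftrightarrow> (\<forall>a'\<in>st J r i. \<forall>a\<in>st J r i. R.eqv i a' a \<longrightarrow> S.eqv j (app J f a') (app J g a))"
    using R.eqv_iff_T[OF i] S.eqv_iff_T[OF j] app_in[OF i j f] app_in[OF i j g] by simp
  also have "\<dots> \<longleftrightarrow> (\<forall>a\<in>st J r i. S.eqv j (app J f a) (app J g a))"
  proof safe
    fix a' a assume "\<forall>a\<in>st J r i. S.eqv j (app J f a) (app J g a)" "a' \<in> st J r i" "a \<in> st J r i"
      "R.eqv i a' a"
    then show "S.eqv j (app J f a') (app J g a)"
      using S.eqv_trans[OF j] app_in[OF i j f] app_in[OF i j g] app_eqv[OF i j g] by meson
  qed (use R.eqv_refl[OF i] in blast)
  finally show ?thesis .
qed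

lemma tr_Arr_iff_inverse_direct:
  assumes inv: "inverse_fs (I\<^sub>T J r) (le\<^sub>T J r) (st J r) (tr J r) (emb J r) (prj J r)"
    and dir: "direct (I\<^sub>T J s) (le\<^sub>T J s) (st J s) (tr J s) (emb J s) (prj J s)"
    and ij: "i \<in> I\<^sub>T J r" "i' \<in> I\<^sub>T J r" "j \<in> I\<^sub>T J s" "j' \<in> I\<^sub>T J s" "le\<^sub>T J r i i'" "le\<^sub>T J s j j'"
    and f': "f' \<in> st J (Arr r s) (IPair i' j')" and f: "f \<in> st J (Arr r s) (IPair i j)"
  shows "tr J (Arr r s) (IPair i' j') (IPair i j) f' f \<longleftrightarrow>
    (\<forall>a'\<in>st J r i'. eqv\<^sub>T J s j' (app J f' a') (emb J s j j' (app J f (prj J r i' i a'))))"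
proof -
  interpret R: factor_sys "I\<^sub>T J r" "le\<^sub>T J r" "st J r" "tr J r" "emb J r" "prj J r"
    by (rule factor_sys_type)
  interpret S: factor_sys "I\<^sub>T J s" "le\<^sub>T J s" "st J s" "tr J s" "emb J s" "prj J s"
    by (rule factor_sys_type)
  have "tr J (Arr r s) (IPair i' j') (IPair i j) f' f \<longleftrightarrow>
      (\<forall>a'\<in>st J r i'. \<forall>a\<in>st J r i. R.eqv i (prj J r i' i a') a \<longrightarrow>
         S.eqv j' (app J f' a') (emb J s j j' (app J f a)))"
    using tr_Arr_iff[OF ij f' f] R.inverse_T_iff[OF inv ij(1,2,5)] S.direct_T_iff[OF dir ij(3,4,6)]
      app_in[OF ij(2,4) f'] app_in[OF ij(1,3) f] by simp
  also have "\<dots> \<longleftrightarrow> (\<forall>a'\<in>st J r i'. S.eqv j' (app J f' a') (emb J s j j' (app J f (prj J r i' i a'))))"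
  proof safe
    fix a' a assume a': "a' \<in> st J r i'" and a: "a \<in> st J r i" and "R.eqv i (prj J r i' i a') a"
      and "\<forall>a'\<in>st J r i'. S.eqv j' (app J f' a') (emb J s j j' (app J f (prj J r i' i a')))"
    moreover have "prj J r i' i a' \<in> st J r i"
      using R.prj_in[OF ij(1,2,5) a'] .
    ultimately have "S.eqv j' (app J f' a') (emb J s j j' (app J f (prj J r i' i a')))"
      "S.eqv j' (emb J s j j' (app J f (prj J r i' i a'))) (emb J s j j' (app J f a))"
      using S.emb_eqv[OF ij(3,4,6)] app_eqv[OF ij(1,3) f] app_in[OF ij(1,3) f] by blast+
    then show "S.eqv j' (app J f' a') (emb J s j j' (app J f a))"
      using S.eqv_trans[OF ij(4)] app_in[OF ij(2,4) f' a'] S.emb_in[OF ij(3,4,6)]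
        app_in[OF ij(1,3) f] a \<open>prj J r i' i a' \<in> st J r i\<close> by meson
  qed (use R.eqv_refl[OF ij(1)] R.prj_in[OF ij(1,2,5)] in blast)
  finally show ?thesis .
qed

lemma direct_Arr:
  assumes inv: "inverse_fs (I\<^sub>T J r) (le\<^sub>T J r) (st J r) (tr J r) (emb J r) (prj J r)"
    and dir: "direct (I\<^sub>T J s) (le\<^sub>T J s) (st J s) (tr J s) (emb J s) (prj J s)"
  shows "direct (I\<^sub>T J (Arr r s)) (le\<^sub>T J (Arr r s)) (st J (Arr r s)) (tr J (Arr r s))
    (emb J (Arr r s)) (prj J (Arr r s))"
proof -
  interpret A: factor_sys "I\<^sub>T J (Arr r s)" "le\<^sub>T J (Arr r s)" "st J (Arr r s)" "tr J (Arr r s)"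
      "emb J (Arr r s)" "prj J (Arr r s)"
    by (rule factor_sys_type)
  show ?thesis
    unfolding direct_def
  proof (intro conjI A.factor_system ballI impI)
    fix k k' f' f
    assume k: "k \<in> I\<^sub>T J (Arr r s)" "k' \<in> I\<^sub>T J (Arr r s)" "le\<^sub>T J (Arr r s) k k'"
      and f': "f' \<in> st J (Arr r s) k'" and f: "f \<in> st J (Arr r s) k"
    obtain i j i' j' where k_eq: "k = IPair i j" "k' = IPair i' j'"
      and ij: "i \<in> I\<^sub>T J r" "i' \<in> I\<^sub>T J r" "j \<in> I\<^sub>T J s" "j' \<in> I\<^sub>T J s"
      using k(1,2) Idx_Arr_cases by metis
    have le: "le\<^sub>T J r i i'" "le\<^sub>T J s j j'"
      using k(3) k_eq by simp_all
    have "emb J (Arr r s) k k' f \<in> st J (Arr r s) k'"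
      using A.emb_in k f .
    then show "tr J (Arr r s) k' k f' f \<longleftrightarrow> A.eqv k' f' (emb J (Arr r s) k k' f)"
      using tr_Arr_iff_inverse_direct[OF inv dir ij(1-4) le] eqv_Arr_iff[OF ij(2,4)]
        emb_Arr_app[OF ij le] f f' k_eq by simp
  qed
qed

lemma tr_Arr_iff_direct_inverse:
  assumes dir: "direct (I\<^sub>T J r) (le\<^sub>T J r) (st J r) (tr J r) (emb J r) (prj J r)"
    and inv: "inverse_fs (I\<^sub>T J s) (le\<^sub>T J s) (st J s) (tr J s) (emb J s) (prj J s)"
    and ij: "i \<in> I\<^sub>T J r" "i' \<in> I\<^sub>T J r" "j \<in> I\<^sub>T J s" "j' \<in> I\<^sub>T J s" "le\<^sub>T J r i i'" "le\<^sub>T J s j j'"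
    and f': "f' \<in> st J (Arr r s) (IPair i' j')" and f: "f \<in> st J (Arr r s) (IPair i j)"
  shows "tr J (Arr r s) (IPair i' j') (IPair i j) f' f \<longleftrightarrow>
    (\<forall>a\<in>st J r i. eqv\<^sub>T J s j (prj J s j' j (app J f' (emb J r i i' a))) (app J f a))"
proof -
  interpret R: factor_sys "I\<^sub>T J r" "le\<^sub>T J r" "st J r" "tr J r" "emb J r" "prj J r"
    by (rule factor_sys_type)
  interpret S: factor_sys "I\<^sub>T J s" "le\<^sub>T J s" "st J s" "tr J s" "emb J s" "prj J s"
    by (rule factor_sys_type)
  have "tr J (Arr r s) (IPair i' j') (IPair i j) f' f \<longleftrightarrow>
      (\<forall>a'\<in>st J r i'. \<forall>a\<in>st J r i. R.eqv i' a' (emb J r i i' a) \<longrightarrow>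
         S.eqv j (prj J s j' j (app J f' a')) (app J f a))"
    using tr_Arr_iff[OF ij f' f] R.direct_T_iff[OF dir ij(1,2,5)] S.inverse_T_iff[OF inv ij(3,4,6)]
      app_in[OF ij(2,4) f'] app_in[OF ij(1,3) f] by simp
  also have "\<dots> \<longleftrightarrow> (\<forall>a\<in>st J r i. S.eqv j (prj J s j' j (app J f' (emb J r i i' a))) (app J f a))"
  proof safe
    fix a' a assume a': "a' \<in> st J r i'" and a: "a \<in> st J r i" and "R.eqv i' a' (emb J r i i' a)"
      and "\<forall>a\<in>st J r i. S.eqv j (prj J s j' j (app J f' (emb J r i i' a))) (app J f a)"
    moreover have Ea: "emb J r i i' a \<in> st J r i'"
      using R.emb_in[OF ij(1,2,5) a] .
    ultimately have "S.eqv j (prj J s j' j (app J f' a')) (prj J s j' j (app J f' (emb J r i i' a)))"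
      "S.eqv j (prj J s j' j (app J f' (emb J r i i' a))) (app J f a)"
      using S.prj_eqv[OF ij(3,4,6)] app_eqv[OF ij(2,4) f'] app_in[OF ij(2,4) f'] by blast+
    then show "S.eqv j (prj J s j' j (app J f' a')) (app J f a)"
      using S.eqv_trans[OF ij(3)] S.prj_in[OF ij(3,4,6)] app_in[OF ij(2,4) f'] app_in[OF ij(1,3) f]
        a a' Ea by meson
  qed (use R.eqv_refl[OF ij(2)] R.emb_in[OF ij(1,2,5)] in blast)
  finally show ?thesis .
qed

lemma inverse_Arr:
  assumes dir: "direct (I\<^sub>T J r) (le\<^sub>T J r) (st J r) (tr J r) (emb J r) (prj J r)"
    and inv: "inverse_fs (I\<^sub>T J s) (le\<^sub>T J s) (st J s) (tr J s) (emb J s) (prj J s)"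
  shows "inverse_fs (I\<^sub>T J (Arr r s)) (le\<^sub>T J (Arr r s)) (st J (Arr r s)) (tr J (Arr r s))
    (emb J (Arr r s)) (prj J (Arr r s))"
proof -
  interpret A: factor_sys "I\<^sub>T J (Arr r s)" "le\<^sub>T J (Arr r s)" "st J (Arr r s)" "tr J (Arr r s)"
      "emb J (Arr r s)" "prj J (Arr r s)"
    by (rule factor_sys_type)
  show ?thesis
    unfolding inverse_fs_def
  proof (intro conjI A.factor_system ballI impI)
    fix k k' f' f
    assume k: "k \<in> I\<^sub>T J (Arr r s)" "k' \<in> I\<^sub>T J (Arr r s)" "le\<^sub>T J (Arr r s) k k'"
      and f': "f' \<in> st J (Arr r s) k'" and f: "f \<in> st J (Arr r s) k"
    obtain i j i' j' where k_eq: "k = IPair i j" "k' = IPair i' j'"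
      and ij: "i \<in> I\<^sub>T J r" "i' \<in> I\<^sub>T J r" "j \<in> I\<^sub>T J s" "j' \<in> I\<^sub>T J s"
      using k(1,2) Idx_Arr_cases by metis
    have le: "le\<^sub>T J r i i'" "le\<^sub>T J s j j'"
      using k(3) k_eq by simp_all
    have "prj J (Arr r s) k' k f' \<in> st J (Arr r s) k"
      using A.prj_in k f' .
    then show "tr J (Arr r s) k' k f' f \<longleftrightarrow> A.eqv k (prj J (Arr r s) k' k f') f"
      using tr_Arr_iff_direct_inverse[OF dir inv ij(1-4) le] eqv_Arr_iff[OF ij(1,3)]
        prj_Arr_app[OF ij le] f f' k_eq by simp
  qed
qed

lemma direct_inverse_by_polarity:
  "(pos_ty \<rho> \<longrightarrow> direct (I\<^sub>T J \<rho>) (le\<^sub>T J \<rho>) (st J \<rho>) (tr J \<rho>) (emb J \<rho>) (prj J \<rho>)) \<and>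
   (neg_ty \<rho> \<longrightarrow> inverse_fs (I\<^sub>T J \<rho>) (le\<^sub>T J \<rho>) (st J \<rho>) (tr J \<rho>) (emb J \<rho>) (prj J \<rho>))"
proof (induction \<rho>)
  case Prop
  interpret factor_sys "I\<^sub>T J Prop" "le\<^sub>T J Prop" "st J Prop" "tr J Prop" "emb J Prop" "prj J Prop"
    by (rule factor_sys_type)
  have "\<And>i i'. le\<^sub>T J Prop i i' \<Longrightarrow> i = i'"
    by simp
  then show ?case
    using direct_if_discrete inverse_if_discrete by blast
next
  case (Base b)
  then show ?case
    using direct_Base by simp
next
  case (Arr r s)
  then show ?case
    using direct_Arr inverse_Arr by simp
qed

end

theorem lemma3p5:
  fixes F :: "'a ix set \<Rightarrow> ('a ix \<Rightarrow> 'a ix \<Rightarrow> bool) \<Rightarrow> 'a ix set set"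
    and J :: "('a, 'b, 'v) interp"
    and \<rho> :: "'b sty" and i i' :: "'a ix"
  assumes "filter_assignment F" and "condition_D F"
    and "interpretation_of_types F J"
    and "i \<in> I\<^sub>T J \<rho>" and "i' \<in> I\<^sub>T J \<rho>" and "le\<^sub>T J \<rho> i i'"
  shows "(pos_ty \<rho> \<longrightarrow>
            direct (I\<^sub>T J \<rho>) (le\<^sub>T J \<rho>) (st J \<rho>) (tr J \<rho>) (emb J \<rho>) (prj J \<rho>) \<and>
            (\<forall>a\<in>lim J \<rho>. \<forall>x\<in>st J \<rho> i. ltr J \<rho> a i x \<longrightarrow> ltr J \<rho> a i' (emb J \<rho> i i' x)))
       \<and> (neg_ty \<rho> \<longrightarrow>
            inverse_fs (I\<^sub>T J \<rho>) (le\<^sub>T J \<rho>) (st J \<rho>) (tr J \<rho>) (emb J \<rho>) (prj J \<rho>) \<and>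
            (\<forall>a\<in>lim J \<rho>. \<forall>x\<in>st J \<rho> i'. ltr J \<rho> a i' x \<longrightarrow> ltr J \<rho> a i (prj J \<rho> i' i x)))"
proof -
  interpret factor_sys "I\<^sub>T J \<rho>" "le\<^sub>T J \<rho>" "st J \<rho>" "tr J \<rho>" "emb J \<rho>" "prj J \<rho>"
    by (rule factor_sys_type[OF assms(3)])
  have lim: "is_limit F (I\<^sub>T J \<rho>) (le\<^sub>T J \<rho>) (st J \<rho>) (tr J \<rho>) (lim J \<rho>) (ltr J \<rho>)"
    by (rule is_limit_type[OF assms(3)])
  show ?thesis
    using direct_inverse_by_polarity[OF assms(3)]
      direct_limit_emb[OF assms(1) _ lim assms(4-6)] inverse_limit_prj[OF assms(1) _ lim assms(4-6)]
    by blast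
qed

end
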